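(* For every $n\in\mathbb{Z}_{\ge0}$ the following identity of polynomials in $x$ holds: $$\sum_{j=0}^{n}x^{j}\prod_{m=1}^{n-j}\Big(x-\frac1m\Big)=(n+1)\prod_{m=2}^{n+1}\Big(x-\frac1m\Big),$$ where empty products equal $1$. *)

theory Defs
  imports "HOL-Computational_Algebra.Polynomial"
begin

end

theory Submission
  imports Defs
begin

(* Writing P k for the product of the factors x - 1/m with 1 <= m <= k, the left-hand side
   S n satisfies S (n+1) = P (n+1) + x S n.  Since P (n+1) = (x - 1) Q n, where Q n is the
   right-hand product, induction gives S (n+1) = ((n+2) x - 1) Q n = (n+2) Q (n+1). *)

lemma sum_monom_mult_atLeast0_atMost_Suc:
  fixes p :: "nat \<Rightarrow> 'a::comm_ring_1 poly"
  shows "(\<Sum>j=0..Suc n. monom 1 j * p (Suc n - j))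
         = p (Suc n) + [:0, 1:] * (\<Sum>j=0..n. monom 1 j * p (n - j))"
  by (subst sum.atLeast0_atMost_Suc_shift) (simp add: sum_distrib_left monom_Suc mult.assoc)

lemma smult_of_nat_linear_factor:
  "smult (of_nat (Suc k)) [:- 1 / of_nat (Suc k), 1:] = [:- 1, of_nat (Suc k) :: 'a::field_char_0:]"
  using of_nat_neq_0[of k, where 'a='a] by simp

lemma sum_monom_mult_prod_linear_factors:
  fixes n :: nat
  shows "(\<Sum>j=0..n. monom (1::'a::field_char_0) j * (\<Prod>m=1..n-j. [:- 1 / of_nat m, 1:]))
         = smult (of_nat (n+1)) (\<Prod>m=2..n+1. [:- 1 / of_nat m, 1:])"
proof (induction n)
  case 0
  then show ?case by simp
next
  case (Suc n)
  define f where "f m = [:- 1 / of_nat m, 1::'a:]" for m :: nat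
  define Q where "Q = (\<Prod>m=2..n+1. f m)"
  have first_factor: "(\<Prod>m=1..Suc n. f m) = [:- 1, 1:] * Q"
    unfolding Q_def by (subst prod.atLeast_Suc_atMost) (simp_all add: f_def numeral_2_eq_2)
  have last_factor: "(\<Prod>m=2..Suc n + 1. f m) = f (Suc n + 1) * Q"
    unfolding Q_def by (simp add: prod.nat_ivl_Suc' mult.commute)
  have IH: "(\<Sum>j=0..n. monom 1 j * (\<Prod>m=1..n-j. f m)) = smult (of_nat (n+1)) Q"
    using Suc.IH by (simp add: f_def Q_def)
  have "(\<Sum>j=0..Suc n. monom 1 j * (\<Prod>m=1..Suc n-j. f m))
        = [:- 1, 1:] * Q + [:0, 1:] * smult (of_nat (n+1)) Q"
    by (simp only: sum_monom_mult_atLeast0_atMost_Suc[of "\<lambda>k. \<Prod>m=1..k. f m"] first_factor IH)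
  also have "\<dots> = ([:- 1, 1:] + [:0, of_nat (n+1):]) * Q"
    unfolding distrib_right by simp
  also have "\<dots> = [:- 1, of_nat (n+2):] * Q"
    by simp
  also have "\<dots> = smult (of_nat (Suc n + 1)) (f (Suc n + 1)) * Q"
    unfolding f_def using smult_of_nat_linear_factor[of "Suc n", where 'a='a] by simp
  also have "\<dots> = smult (of_nat (Suc n + 1)) (\<Prod>m=2..Suc n + 1. f m)"
    by (simp only: last_factor mult_smult_left)
  finally show ?case by (simp add: f_def)
qed

theorem mainTheorem7:
  fixes n :: nat
  shows "(\<Sum>j=0..n. monom (1::rat) j * (\<Prod>m=1..n-j. [:- 1 / of_nat m, 1:]))
         = smult (of_nat (n+1)) (\<Prod>m=2..n+1. [:- 1 / of_nat m, 1:])"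
  by (rule sum_monom_mult_prod_linear_factors)

end
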